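(* Let $A^{(n)}_k$ be Knuth's Faulhaber coefficients, defined by $$\sum_{n\ge1}\sum_{k=0}^{n-1}\frac{x^{2n}}{(2n)!}A^{(n)}_k y^{k}=\left(\frac{x\sqrt y}{2}\right)\frac{\cosh\!\left(\tfrac12 x\sqrt{y+4}\right)-\cosh\!\left(\tfrac12 x\sqrt y\right)}{\sinh\!\left(\tfrac12 x\sqrt y\right)},$$ and for $n\ge k\ge2$ let $b(n,k)=(-1)^{n-k}A^{(n)}_{n-k}\frac{(k!)^2}{(2k+1)!}$. Then for all $n\ge k\ge2$, $$b(n,k)=\frac{4\Gamma(2n+1)\Gamma(k+2)}{\Gamma(2k+3)}\sum_{j=0}^{\lfloor k/2\rfloor-1}\frac{(-1)^{j}\Gamma(2k-2-2j)}{\Gamma(k-1-2j)\Gamma(2j+2)}\,\frac{\zeta(2n-2j-2)}{(2\pi)^{2n-2j-2}},$$ where $\zeta$ is the Riemann zeta function. *)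

theory Defs
  imports "HOL-Analysis.Analysis"
begin

definition riemann_zeta :: "real \<Rightarrow> real" where
  "riemann_zeta s = (\<Sum>m. 1 / (real (Suc m)) powr s)"

text \<open>The right-hand side of Knuth's generating function, as a function of x and y
  (extended by its limit value 0 at the removable point sinh(x sqrt y / 2) = 0).\<close>
definition faulhaber_gf :: "real \<Rightarrow> real \<Rightarrow> real" where
  "faulhaber_gf x y =
     (if sinh (x * sqrt y / 2) = 0 then 0
      else (x * sqrt y / 2) *
           (cosh (x * sqrt (y + 4) / 2) - cosh (x * sqrt y / 2)) / sinh (x * sqrt y / 2))"

definition faulhaber_A :: "nat \<Rightarrow> nat \<Rightarrow> real" where
  "faulhaber_A = (THE A.
      (\<forall>n k. (n = 0 \<or> n \<le> k) \<longrightarrow> A n k = 0) \<and>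
      (\<forall>y > 0. \<exists>e > 0. \<forall>x. \<bar>x\<bar> < e \<longrightarrow>
          (\<lambda>n. \<Sum>k<n. x ^ (2 * n) / fact (2 * n) * A n k * y ^ k) sums faulhaber_gf x y))"

definition faulhaber_b :: "nat \<Rightarrow> nat \<Rightarrow> real" where
  "faulhaber_b n k = (-1) ^ (n - k) * faulhaber_A n (n - k) * (fact k)\<^sup>2 / fact (2 * k + 1)"

end

theory Submission
  imports Defs "HOL-Complex_Analysis.Cauchy_Integral_Formula"
begin

text \<open>
  Put \<open>T = x\<^sup>2\<close>, \<open>C r = cosh \<surd>(rT)\<close> and \<open>S r = sinh \<surd>(rT) / \<surd>(rT)\<close>, as power series
  in \<open>T\<close>. The generating function is \<open>(C (y/4 + 1) - C (y/4)) / S (y/4)\<close>; expanding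
  \<open>(y/4 + 1)\<^sup>m - (y/4)\<^sup>m\<close> binomially shows that \<open>A\<^sup>(\<^sup>n\<^sup>)\<^sub>n\<^sub>-\<^sub>k\<close> is \<open>(2n)! / 4\<^bsup>n-k\<^esup>\<close> times
  the \<open>T\<^sup>n\<close>-coefficient of \<open>T\<^sup>k (C 1)\<^bsup>(k)\<^esup> / (k! S 1)\<close>. Rescaling \<open>T\<close> by \<open>-1/4\<close> turns
  \<open>C\<close> and \<open>S\<close> into \<open>cos z\<close> and \<open>sin z / z\<close> with \<open>z = \<surd>T / 2\<close>. Iterating the Euler operator
  \<open>T d/dT\<close> gives \<open>(-4T)\<^sup>k (d/dT)\<^sup>k cos z = P\<^sub>k(T) cos z + R\<^sub>k(T) sin z / z\<close> with explicit
  polynomials \<open>P\<^sub>k\<close>, \<open>R\<^sub>k\<close>, where \<open>R\<^sub>k\<close> has degree below \<open>k\<close> once \<open>k \<ge> 2\<close>. Dividing by \<open>sin z / z\<close>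
  therefore leaves \<open>P\<^sub>k(T) z cot z\<close> in every degree \<open>n \<ge> k\<close>, and Euler's series
  \<open>z cot z = 1 - 2 \<Sum>\<^sub>m \<zeta>(2m) (z/\<pi>)\<^bsup>2m\<^esup>\<close>, obtained from the partial fractions of the
  cotangent, turns the coefficients of \<open>P\<^sub>k\<close> into the stated Gamma quotients.
\<close>

section \<open>Uniqueness of power series expansions\<close>

lemma powser_coeff_zero_if_sums_zero_at_right:
  fixes d :: "nat \<Rightarrow> real"
  assumes "\<delta> > 0"
    and zero: "\<And>T. 0 < T \<Longrightarrow> T < \<delta> \<Longrightarrow> (\<lambda>n. d n * T ^ n) sums 0"
  shows "d n = 0"
proof -
  define r where "r = \<delta> / 2"
  have r: "0 < r" "r < \<delta>" using \<open>\<delta> > 0\<close> by (auto simp: r_def)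
  have "summable (\<lambda>n. d n * r ^ n)" using zero[OF r] by (simp add: sums_iff)
  then have radius: "ereal r \<le> conv_radius d" using conv_radius_geI[of d r] r by simp
  define f where "f x = (\<Sum>n. d n * x ^ n)" for x :: real
  have f: "(\<lambda>n. d n * x ^ n) sums f x" if "norm x < r" for x
    using that unfolding f_def
    by (intro summable_sums summable_in_conv_radius order.strict_trans2[OF _ radius]) simp
  have f_zero: "f x = 0" if "0 < x" "x < r" for x
    using zero[of x] that r by (simp add: f_def sums_iff)
  have "d 0 = 0"
  proof -
    have "(f \<longlongrightarrow> d 0) (at_right 0)"
      using powser_limit_0[OF r(1) f] by (simp add: filterlim_at_split)
    moreover have "eventually (\<lambda>x. f x = 0) (at_right (0::real))"
      using r(1) by (auto simp: eventually_at_right_field intro!: exI[of _ r] f_zero)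
    ultimately show ?thesis
      by (metis tendsto_eventually tendsto_unique trivial_limit_at_right_real)
  qed
  show ?thesis
  proof (rule ccontr)
    assume "d n \<noteq> 0"
    with \<open>d 0 = 0\<close> have "n > 0" by (cases n) auto
    have "f 0 = 0" using \<open>d 0 = 0\<close> by (simp add: f_def)
    \<comment> \<open>a power series that is not identically zero has isolated zeros\<close>
    then obtain s where s: "0 < s" "\<And>z. z \<in> cball 0 s - {0} \<Longrightarrow> f z \<noteq> 0"
      using powser_0_nonzero[where r=r and a=d and \<xi>=0 and f=f and m=n] r f \<open>d n \<noteq> 0\<close> \<open>n > 0\<close>
      by auto
    have "min s (r/2) \<in> cball 0 s - {0}" using s r by auto
    moreover have "f (min s (r/2)) = 0" using s r by (intro f_zero) auto
    ultimately show False using s by blast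
  qed
qed

lemma fps_eq_if_eval_eq_at_right:
  fixes F G :: "real fps"
  assumes "\<delta> > 0" "ereal \<delta> \<le> fps_conv_radius F" "ereal \<delta> \<le> fps_conv_radius G"
    and eq: "\<And>T. 0 < T \<Longrightarrow> T < \<delta> \<Longrightarrow> eval_fps F T = eval_fps G T"
  shows "F = G"
proof (rule fps_ext)
  fix n
  have "fps_nth (F - G) n = 0"
  proof (rule powser_coeff_zero_if_sums_zero_at_right[OF \<open>\<delta> > 0\<close>])
    fix T :: real assume T: "0 < T" "T < \<delta>"
    then have "ereal (norm T) < ereal \<delta>" by simp
    then have F: "ereal (norm T) < fps_conv_radius F" and G: "ereal (norm T) < fps_conv_radius G"
      using order.strict_trans2 assms(2,3) by blast+
    then have "ereal (norm T) < min (fps_conv_radius F) (fps_conv_radius G)" by simp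
    then have "ereal (norm T) < fps_conv_radius (F - G)"
      using fps_conv_radius_diff by (rule order.strict_trans2)
    then show "(\<lambda>n. fps_nth (F - G) n * T ^ n) sums 0"
      using sums_eval_fps eval_fps_diff[OF F G] eq[OF T] by fastforce
  qed
  then show "fps_nth F n = fps_nth G n" by simp
qed

lemma eval_fps_eqI:
  fixes F :: "real fps"
  assumes "ereal (norm T) < fps_conv_radius F" "(\<lambda>n. fps_nth F n * T ^ n) sums v"
  shows "eval_fps F T = v"
  using sums_eval_fps[OF assms(1)] assms(2) sums_unique2 by blast

lemma fps_conv_radius_inf_if_fact_bound:
  fixes a :: "nat \<Rightarrow> real"
  assumes "\<And>m. \<bar>a m\<bar> \<le> B ^ m / fact m"
  shows "fps_conv_radius (Abs_fps a) = \<infinity>"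
proof -
  have "summable (\<lambda>n. a n * z ^ n)" for z :: real
  proof (rule summable_comparison_test')
    show "summable (\<lambda>n. (\<bar>B\<bar> * \<bar>z\<bar>) ^ n /\<^sub>R fact n)" by (rule summable_exp_generic)
    have "norm (a n * z ^ n) \<le> B ^ n / fact n * \<bar>z\<bar> ^ n" for n
      using mult_right_mono[OF assms[of n], of "\<bar>z\<bar> ^ n"] by (simp add: abs_mult power_abs)
    also have "B ^ n / fact n * \<bar>z\<bar> ^ n \<le> (\<bar>B\<bar> * \<bar>z\<bar>) ^ n /\<^sub>R fact n" for n
      by (simp add: power_mult_distrib divide_simps power_abs[symmetric] mult_right_mono)
    finally show "norm (a n * z ^ n) \<le> (\<bar>B\<bar> * \<bar>z\<bar>) ^ n /\<^sub>R fact n" for n .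
  qed
  then show ?thesis unfolding fps_conv_radius_def by (intro conv_radius_inftyI'') simp
qed

lemma polyfun_coeff_zero_if_zero_at_pos:
  fixes c :: "nat \<Rightarrow> real"
  assumes "\<And>y. y > 0 \<Longrightarrow> (\<Sum>k<n. c k * y ^ k) = 0" and "k < n"
  shows "c k = 0"
proof -
  define c' where "c' i = (if i < n then c i else 0)" for i
  have "(\<Sum>i\<le>n. c' i * y ^ i) = (\<Sum>i<n. c i * y ^ i)" for y :: real
    by (simp add: c'_def lessThan_Suc_atMost[symmetric])
  then have "{0<..<1::real} \<subseteq> {y. (\<Sum>i\<le>n. c' i * y ^ i) = 0}"
    using assms(1) by auto
  then have "infinite {y. (\<Sum>i\<le>n. c' i * y ^ i) = 0}"
    by (metis finite_subset infinite_Ioo_iff zero_less_one)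
  then have "c' k = 0" using polyfun_finite_roots[of c' n] \<open>k < n\<close> by auto
  then show ?thesis using \<open>k < n\<close> by (simp add: c'_def)
qed

lemma even_double_powser_coeff_zero:
  fixes c :: "nat \<Rightarrow> nat \<Rightarrow> real"
  assumes zero: "\<And>y. y > 0 \<Longrightarrow>
      \<exists>e>0. \<forall>x. \<bar>x\<bar> < e \<longrightarrow> (\<lambda>n. \<Sum>k<n. x ^ (2 * n) * c n k * y ^ k) sums 0"
    and "k < n"
  shows "c n k = 0"
proof (rule polyfun_coeff_zero_if_zero_at_pos[OF _ \<open>k < n\<close>])
  fix y :: real assume "y > 0"
  then obtain e where "e > 0"
    and e: "\<And>x. \<bar>x\<bar> < e \<Longrightarrow> (\<lambda>n. \<Sum>k<n. x ^ (2 * n) * c n k * y ^ k) sums 0"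
    using zero by blast
  show "(\<Sum>k<n. c n k * y ^ k) = 0"
  proof (rule powser_coeff_zero_if_sums_zero_at_right[where d="\<lambda>n. \<Sum>k<n. c n k * y ^ k"])
    show "e\<^sup>2 > 0" using \<open>e > 0\<close> by simp
    fix T :: real assume "0 < T" "T < e\<^sup>2"
    then have "\<bar>sqrt T\<bar> < e" using real_sqrt_less_mono[of T "e\<^sup>2"] \<open>e > 0\<close> by simp
    have "sqrt T ^ (2 * n) = T ^ n" for n
      unfolding power_mult using \<open>0 < T\<close> by simp
    with e[OF \<open>\<bar>sqrt T\<bar> < e\<close>] show "(\<lambda>n. (\<Sum>k<n. c n k * y ^ k) * T ^ n) sums 0"
      by (simp add: sum_distrib_left mult_ac)
  qed
qed

section \<open>The power series of \<open>cosh \<surd>(rT)\<close> and \<open>sinh \<surd>(rT) / \<surd>(rT)\<close>\<close>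

lemma cosh_paired: "(\<lambda>m. x ^ (2 * m) / fact (2 * m)) sums cosh (x :: real)"
proof -
  have "(\<lambda>m. (\<lambda>n. if even n then x ^ n /\<^sub>R fact n else 0) (2 * m)) sums cosh x"
    by (subst sums_mono_reindex) (auto intro: strict_monoI cosh_converges)
  then show ?thesis by (simp add: divide_inverse mult.commute)
qed

lemma sinh_paired: "(\<lambda>m. x ^ (2 * m + 1) / fact (2 * m + 1)) sums sinh (x :: real)"
proof -
  have "(\<lambda>m. (\<lambda>n. if even n then 0 else x ^ n /\<^sub>R fact n) (2 * m + 1)) sums sinh x"
    by (subst sums_mono_reindex) (auto intro: strict_monoI sinh_converges elim!: oddE)
  then show ?thesis by (simp add: divide_inverse mult.commute)
qed

text \<open>In the variable \<open>T\<close>, \<open>cosh_sqrt_fps r\<close> is \<open>cosh \<surd>(rT)\<close> and \<open>sinhc_sqrt_fps r\<close> is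
  \<open>sinh \<surd>(rT) / \<surd>(rT)\<close>; for \<open>r < 0\<close> they are \<open>cos z\<close> and \<open>sin z / z\<close> at \<open>z = \<surd>(-rT)\<close>.\<close>

definition cosh_sqrt_fps :: "real \<Rightarrow> real fps" where
  "cosh_sqrt_fps r = Abs_fps (\<lambda>m. r ^ m / fact (2 * m))"

definition sinhc_sqrt_fps :: "real \<Rightarrow> real fps" where
  "sinhc_sqrt_fps r = Abs_fps (\<lambda>m. r ^ m / fact (2 * m + 1))"

lemma fps_conv_radius_cosh_sqrt_fps [simp]: "fps_conv_radius (cosh_sqrt_fps r) = \<infinity>"
  unfolding cosh_sqrt_fps_def
proof (rule fps_conv_radius_inf_if_fact_bound)
  show "\<bar>r ^ m / fact (2 * m)\<bar> \<le> \<bar>r\<bar> ^ m / fact m" for m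
    by (simp add: power_abs divide_left_mono fact_mono)
qed

lemma fps_conv_radius_sinhc_sqrt_fps [simp]: "fps_conv_radius (sinhc_sqrt_fps r) = \<infinity>"
  unfolding sinhc_sqrt_fps_def
proof (rule fps_conv_radius_inf_if_fact_bound)
  show "\<bar>r ^ m / fact (2 * m + 1)\<bar> \<le> \<bar>r\<bar> ^ m / fact m" for m
    unfolding abs_divide power_abs by (intro divide_left_mono) (auto simp del: fact_Suc intro: fact_mono)
qed

lemma fps_nth_sinhc_sqrt_fps_0 [simp]: "fps_nth (sinhc_sqrt_fps r) 0 = 1"
  by (simp add: sinhc_sqrt_fps_def)

lemma eval_cosh_sqrt_fps:
  assumes "z\<^sup>2 = r * T"
  shows "eval_fps (cosh_sqrt_fps r) T = cosh z"
proof (rule eval_fps_eqI)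
  have "z ^ (2 * m) / fact (2 * m) = fps_nth (cosh_sqrt_fps r) m * T ^ m" for m
    by (simp add: cosh_sqrt_fps_def power_mult assms power_mult_distrib)
  with cosh_paired[of z] show "(\<lambda>m. fps_nth (cosh_sqrt_fps r) m * T ^ m) sums cosh z" by simp
qed simp

lemma eval_cosh_sqrt_fps_neg:
  assumes "z\<^sup>2 = - r * T"
  shows "eval_fps (cosh_sqrt_fps r) T = cos z"
proof (rule eval_fps_eqI)
  have "(- 1) ^ m / fact (2 * m) * z ^ (2 * m) = fps_nth (cosh_sqrt_fps r) m * T ^ m" for m
    unfolding power_mult assms by (simp add: cosh_sqrt_fps_def flip: power_mult_distrib)
  with cos_paired[of z] show "(\<lambda>m. fps_nth (cosh_sqrt_fps r) m * T ^ m) sums cos z" by simp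
qed simp

lemma eval_sinhc_sqrt_fps:
  assumes "z\<^sup>2 = r * T" "z \<noteq> 0"
  shows "eval_fps (sinhc_sqrt_fps r) T = sinh z / z"
proof (rule eval_fps_eqI)
  have "z ^ (2 * m + 1) / fact (2 * m + 1) / z = fps_nth (sinhc_sqrt_fps r) m * T ^ m" for m
    using assms by (simp add: sinhc_sqrt_fps_def power_mult power_mult_distrib)
  with sums_divide[OF sinh_paired[of z], of z]
  show "(\<lambda>m. fps_nth (sinhc_sqrt_fps r) m * T ^ m) sums (sinh z / z)" by simp
qed simp

lemma eval_sinhc_sqrt_fps_neg:
  assumes "z\<^sup>2 = - r * T" "z \<noteq> 0"
  shows "eval_fps (sinhc_sqrt_fps r) T = sin z / z"
proof (rule eval_fps_eqI)
  have "(- 1) ^ m / fact (2 * m + 1) * z ^ (2 * m + 1) / z = fps_nth (sinhc_sqrt_fps r) m * T ^ m" for m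
    using \<open>z \<noteq> 0\<close> unfolding power_add power_mult assms
    by (simp add: sinhc_sqrt_fps_def flip: power_mult_distrib)
  with sums_divide[OF sin_paired[of z], of z]
  show "(\<lambda>m. fps_nth (sinhc_sqrt_fps r) m * T ^ m) sums (sin z / z)" by simp
qed simp

lemma fps_nth_inverse_sinhc_sqrt_fps:
  "fps_nth (inverse (sinhc_sqrt_fps r)) l = r ^ l * fps_nth (inverse (sinhc_sqrt_fps 1)) l"
proof -
  have "inverse (sinhc_sqrt_fps r) = Abs_fps (\<lambda>l. r ^ l * fps_nth (inverse (sinhc_sqrt_fps 1)) l)"
  proof (rule fps_inverse_unique, rule fps_ext)
    fix n
    have "fps_nth (sinhc_sqrt_fps r * Abs_fps (\<lambda>l. r ^ l * fps_nth (inverse (sinhc_sqrt_fps 1)) l)) n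
        = r ^ n * fps_nth (sinhc_sqrt_fps 1 * inverse (sinhc_sqrt_fps 1)) n"
      by (auto simp: fps_mult_nth sinhc_sqrt_fps_def sum_distrib_left power_add[symmetric]
          intro!: sum.cong)
    also have "\<dots> = fps_nth 1 n"
      by (subst inverse_mult_eq_1') simp_all
    finally show "fps_nth (sinhc_sqrt_fps r * Abs_fps (\<lambda>l. r ^ l * fps_nth (inverse (sinhc_sqrt_fps 1)) l)) n
        = fps_nth 1 n" .
  qed
  then show ?thesis by simp
qed

section \<open>Euler's cotangent series\<close>

lemma Gamma_reflection_real:
  fixes t :: real
  assumes "t \<notin> \<int>"
  shows "Gamma t * Gamma (1 - t) * sin (pi * t) = pi"
proof -
  have "Gamma (complex_of_real t) * Gamma (1 - complex_of_real t) = pi / sin (pi * complex_of_real t)"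
    by (rule Gamma_reflection_complex)
  then have "complex_of_real (Gamma t * Gamma (1 - t)) = complex_of_real (pi / sin (pi * t))"
    by (simp flip: Gamma_complex_of_real sin_of_real)
  then have "Gamma t * Gamma (1 - t) = pi / sin (pi * t)"
    by (simp only: of_real_eq_iff)
  moreover have "sin (pi * t) \<noteq> 0"
    using assms by (auto simp: sin_zero_iff_int2 Ints_def)
  ultimately show ?thesis by simp
qed

lemma Digamma_reflection_real:
  fixes t :: real
  assumes t: "0 < t" "t < 1"
  shows "Digamma (1 - t) - Digamma t = pi * cos (pi * t) / sin (pi * t)"
proof -
  define G where "G x = Gamma x * Gamma (1 - x) * sin (pi * x)" for x :: real
  have "x \<notin> \<int>" if "0 < x" "x < 1" for x :: real
    using that by (auto elim!: Ints_cases)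
  then have G_const: "G x = pi" if "x \<in> {0<..<1}" for x
    using that Gamma_reflection_real by (auto simp: G_def)
  have "t \<notin> \<int>\<^sub>\<le>\<^sub>0" "1 - t \<notin> \<int>\<^sub>\<le>\<^sub>0"
    using t by (auto elim!: nonpos_Ints_cases)
  \<comment> \<open>differentiating the reflection formula, using \<open>Gamma' = Gamma * Digamma\<close>\<close>
  then have "(G has_field_derivative Gamma t * Gamma (1 - t) *
      (pi * cos (pi * t) - (Digamma (1 - t) - Digamma t) * sin (pi * t))) (at t)"
    unfolding G_def by (auto intro!: derivative_eq_intros simp: algebra_simps)
  moreover have "((\<lambda>_. pi) has_field_derivative 0) (at t)" by (rule DERIV_const)
  then have "(G has_field_derivative 0) (at t)"
    by (rule has_field_derivative_transform_within_open[where S="{0<..<1}"]) (use t G_const in auto)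
  ultimately have "Gamma t * Gamma (1 - t) *
      (pi * cos (pi * t) - (Digamma (1 - t) - Digamma t) * sin (pi * t)) = 0"
    by (rule DERIV_unique)
  moreover have "Gamma t > 0" "Gamma (1 - t) > 0"
    using t by (auto intro: Gamma_real_pos)
  ultimately have "(Digamma (1 - t) - Digamma t) * sin (pi * t) = pi * cos (pi * t)"
    by simp
  moreover have "sin (pi * t) \<noteq> 0"
    using t sin_gt_zero[of "pi * t"] by auto
  ultimately show ?thesis by (simp add: nonzero_eq_divide_eq)
qed

lemma cot_partial_fractions_real:
  fixes t :: real
  assumes t: "0 < t" "t < 1"
  shows "(\<lambda>k. 2 * t / ((real k + 1)\<^sup>2 - t\<^sup>2)) sums (1 / t - pi * cos (pi * t) / sin (pi * t))"
proof -
  have "(\<lambda>k. (inverse (real (Suc k)) - inverse ((1 + t) + real k)) -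
             (inverse (real (Suc k)) - inverse ((1 - t) + real k))) sums
        ((Digamma (1 + t) + euler_mascheroni) - (Digamma (1 - t) + euler_mascheroni))"
    using t summable_Digamma[of "1 + t"] summable_Digamma[of "1 - t"]
    by (intro sums_diff) (auto simp: Digamma_def summable_sums)
  also have "(\<lambda>k. (inverse (real (Suc k)) - inverse ((1 + t) + real k)) -
             (inverse (real (Suc k)) - inverse ((1 - t) + real k))) =
             (\<lambda>k. 2 * t / ((real k + 1)\<^sup>2 - t\<^sup>2))"
  proof
    fix k
    have "1 + t + real k \<noteq> 0" "1 - t + real k \<noteq> 0" using t by auto
    then have "1 / (1 - t + real k) - 1 / (1 + t + real k) =
        ((1 + t + real k) - (1 - t + real k)) / ((1 - t + real k) * (1 + t + real k))"
      by (simp add: diff_frac_eq)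
    also have "\<dots> = 2 * t / ((real k + 1)\<^sup>2 - t\<^sup>2)"
      by (simp add: power2_eq_square algebra_simps)
    finally show "(inverse (real (Suc k)) - inverse ((1 + t) + real k)) -
             (inverse (real (Suc k)) - inverse ((1 - t) + real k)) = 2 * t / ((real k + 1)\<^sup>2 - t\<^sup>2)"
      by (simp add: inverse_eq_divide add.assoc)
  qed
  also have "(Digamma (1 + t) + euler_mascheroni) - (Digamma (1 - t) + euler_mascheroni) =
             1 / t - (Digamma (1 - t) - Digamma t)"
  proof -
    have "Digamma (1 + t) = Digamma t + 1 / t"
      using Digamma_plus1[of t] t by (metis add.commute less_irrefl)
    then show ?thesis by linarith
  qed
  finally show ?thesis by (simp only: Digamma_reflection_real[OF t])
qed

lemma riemann_zeta_even_sums: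
  assumes "m \<ge> 1"
  shows "(\<lambda>k. 1 / (real k + 1) ^ (2 * m)) sums riemann_zeta (real (2 * m))"
proof -
  have "summable (\<lambda>k. inverse (real k ^ (2 * m)))"
    using assms by (intro inverse_power_summable) auto
  then have "summable (\<lambda>k. 1 / (real k + 1) ^ (2 * m))"
    by (subst (asm) summable_Suc_iff[symmetric]) (simp add: divide_inverse add.commute)
  moreover have "real (Suc k) powr real (2 * m) = (real k + 1) ^ (2 * m)" for k
    by (subst powr_realpow) (auto simp: add.commute)
  then have "riemann_zeta (real (2 * m)) = (\<Sum>k. 1 / (real k + 1) ^ (2 * m))"
    unfolding riemann_zeta_def by (simp only:)
  ultimately show ?thesis by (simp add: summable_sums)
qed

text \<open>Expanding each partial fraction of the cotangent into a geometric series and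
  summing in the other order.\<close>

lemma riemann_zeta_cot_sums:
  fixes t :: real
  assumes t: "0 < t" "t < 1"
  shows "(\<lambda>m. 2 * riemann_zeta (real (2 * (m + 1))) * t ^ (2 * (m + 1))) sums
           (1 - pi * t * cos (pi * t) / sin (pi * t))"
proof -
  define f where "f p = 2 * (t\<^sup>2 / (real (fst p) + 1)\<^sup>2) ^ (snd p + 1)" for p :: "nat \<times> nat"
  define g where "g k = 2 * t\<^sup>2 / ((real k + 1)\<^sup>2 - t\<^sup>2)" for k :: nat
  define S where "S = 1 - pi * t * cos (pi * t) / sin (pi * t)"
  have f_nonneg: "f p \<ge> 0" for p unfolding f_def by auto
  have rows: "((\<lambda>m. f (k, m)) has_sum g k) UNIV" for k
  proof -
    define q where "q = t\<^sup>2 / (real k + 1)\<^sup>2"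
    have "t\<^sup>2 < 1" using t by (simp add: power_less_one_iff)
    also have "1 \<le> (real k + 1)\<^sup>2" by simp
    finally have q: "0 \<le> q" "q < 1" by (simp_all add: q_def)
    have "(\<lambda>m. 2 * q * q ^ m) sums (2 * q * (1 / (1 - q)))"
      using q by (intro sums_mult geometric_sums) simp
    also have "2 * q * (1 / (1 - q)) = g k"
      using q by (simp add: g_def q_def field_simps)
    finally show ?thesis
      using f_nonneg by (intro sums_nonneg_imp_has_sum) (simp_all add: f_def q_def mult.assoc)
  qed
  have "(\<lambda>k. t * (2 * t / ((real k + 1)\<^sup>2 - t\<^sup>2))) sums (t * (1 / t - pi * cos (pi * t) / sin (pi * t)))"
    by (intro sums_mult cot_partial_fractions_real t)
  moreover have "(\<lambda>k. t * (2 * t / ((real k + 1)\<^sup>2 - t\<^sup>2))) = g"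
    by (simp add: fun_eq_iff g_def power2_eq_square)
  moreover have "t * (1 / t - pi * cos (pi * t) / sin (pi * t)) = S"
    using t by (simp add: S_def field_simps)
  ultimately have "g sums S" by simp
  moreover have "g k \<ge> 0" for k using has_sum_nonneg[OF rows[of k]] f_nonneg by auto
  ultimately have g_sum: "(g has_sum S) UNIV" by (intro sums_nonneg_imp_has_sum)
  have "f summable_on (UNIV \<times> UNIV)"
    using rows has_sum_imp_summable[OF g_sum] f_nonneg by (rule summable_on_SigmaI)
  with rows g_sum have "(f has_sum S) (UNIV \<times> UNIV)"
    by (rule has_sum_SigmaI)
  then have swapped: "((\<lambda>(m, k). f (k, m)) has_sum S) (UNIV \<times> UNIV)"
    by (subst (asm) has_sum_swap)
  have columns: "((\<lambda>k. f (k, m)) has_sum (2 * riemann_zeta (real (2 * (m + 1))) * t ^ (2 * (m + 1)))) UNIV"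
    for m
  proof -
    have "(\<lambda>k. 2 * (1 / (real k + 1) ^ (2 * (m + 1))) * t ^ (2 * (m + 1))) sums
             (2 * riemann_zeta (real (2 * (m + 1))) * t ^ (2 * (m + 1)))"
      by (intro sums_mult sums_mult2 riemann_zeta_even_sums) simp
    also have "(\<lambda>k. 2 * (1 / (real k + 1) ^ (2 * (m + 1))) * t ^ (2 * (m + 1))) = (\<lambda>k. f (k, m))"
      unfolding fun_eq_iff f_def fst_conv snd_conv power_mult power_divide by simp
    finally show ?thesis
      using f_nonneg by (intro sums_nonneg_imp_has_sum) auto
  qed
  have "((\<lambda>m. 2 * riemann_zeta (real (2 * (m + 1))) * t ^ (2 * (m + 1))) has_sum S) UNIV"
    by (rule has_sum_SigmaD[OF swapped]) (simp only: case_prod_conv columns)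
  then show ?thesis unfolding S_def by (rule has_sum_imp_sums)
qed

text \<open>Euler's series \<open>z cot z = 1 - 2 \<Sum>\<^sub>m \<zeta>(2m) (z/\<pi>)\<^bsup>2m\<^esup>\<close>, in the variable \<open>T = 4 z\<^sup>2\<close>.\<close>

definition zeta_cot_fps :: "real fps" where
  "zeta_cot_fps =
     Abs_fps (\<lambda>m. if m = 0 then 1 else - 2 * riemann_zeta (real (2 * m)) / (2 * pi) ^ (2 * m))"

lemma zeta_cot_fps_sums:
  assumes t: "0 < t" "t < 1"
  shows "(\<lambda>m. fps_nth zeta_cot_fps m * ((2 * pi * t)\<^sup>2) ^ m) sums (pi * t * cos (pi * t) / sin (pi * t))"
proof -
  have "(\<lambda>m. - (2 * riemann_zeta (real (2 * (m + 1))) * t ^ (2 * (m + 1)))) sums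
      (- (1 - pi * t * cos (pi * t) / sin (pi * t)))"
    by (rule sums_minus[OF riemann_zeta_cot_sums[OF t]])
  moreover have "- (2 * riemann_zeta (real (2 * (m + 1))) * t ^ (2 * (m + 1))) =
      fps_nth zeta_cot_fps (Suc m) * ((2 * pi * t)\<^sup>2) ^ Suc m" for m
  proof -
    have "((2 * pi * t)\<^sup>2) ^ Suc m = (2 * pi) ^ (2 * Suc m) * t ^ (2 * Suc m)"
      by (simp only: power_mult[symmetric] power_mult_distrib)
    then show ?thesis by (simp add: zeta_cot_fps_def)
  qed
  ultimately have "(\<lambda>m. fps_nth zeta_cot_fps (Suc m) * ((2 * pi * t)\<^sup>2) ^ Suc m) sums
      (pi * t * cos (pi * t) / sin (pi * t) - 1)"
    by simp
  then show ?thesis by (subst (asm) sums_Suc_iff) (simp add: zeta_cot_fps_def)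
qed

lemma fps_conv_radius_zeta_cot_fps: "fps_conv_radius zeta_cot_fps \<ge> 1"
proof -
  have "1 / (2 * pi) < 1" using pi_gt3 by simp
  then have "summable (\<lambda>m. fps_nth zeta_cot_fps m * 1 ^ m)"
    using zeta_cot_fps_sums[of "1 / (2 * pi)"] by (simp add: sums_iff)
  then have "conv_radius (fps_nth zeta_cot_fps) \<ge> norm (1::real)" by (rule conv_radius_geI)
  then show ?thesis by (simp add: fps_conv_radius_def one_ereal_def)
qed

lemma zeta_cot_fps_mult_sinhc_sqrt_fps:
  "zeta_cot_fps * sinhc_sqrt_fps (- (1/4)) = cosh_sqrt_fps (- (1/4))"
proof (rule fps_eq_if_eval_eq_at_right[where \<delta> = 1])
  have "min (fps_conv_radius zeta_cot_fps) (fps_conv_radius (sinhc_sqrt_fps (- (1/4)))) \<ge> 1"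
    using fps_conv_radius_zeta_cot_fps by simp
  then show "ereal 1 \<le> fps_conv_radius (zeta_cot_fps * sinhc_sqrt_fps (- (1/4)))"
    using fps_conv_radius_mult order_trans by (metis one_ereal_def)
  fix T :: real assume T: "0 < T" "T < 1"
  define t where "t = sqrt T / (2 * pi)"
  define z where "z = pi * t"
  have "sqrt T < 1" using T by simp
  then have "sqrt T < 2 * pi" using pi_gt3 by linarith
  then have t: "0 < t" "t < 1" using T by (simp_all add: t_def divide_less_eq)
  have z: "0 < z" "z < pi" using t by (simp_all add: z_def)
  have T_eq: "T = (2 * pi * t)\<^sup>2" and z_sq: "z\<^sup>2 = - (- (1/4)) * T"
    using T by (simp_all add: t_def z_def power_divide power_mult_distrib)
  have "ereal (norm T) < 1" using T by simp
  then have T_radius: "ereal (norm T) < fps_conv_radius zeta_cot_fps"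
    using fps_conv_radius_zeta_cot_fps by (rule order.strict_trans2)
  then have "eval_fps (zeta_cot_fps * sinhc_sqrt_fps (- (1/4))) T =
      eval_fps zeta_cot_fps T * eval_fps (sinhc_sqrt_fps (- (1/4))) T"
    by (intro eval_fps_mult) simp_all
  also have "eval_fps zeta_cot_fps T = z * cos z / sin z"
    using T_radius zeta_cot_fps_sums[OF t] unfolding z_def T_eq[symmetric]
    by (rule eval_fps_eqI)
  also have "eval_fps (sinhc_sqrt_fps (- (1/4))) T = sin z / z"
    using z_sq z by (intro eval_sinhc_sqrt_fps_neg) auto
  also have "z * cos z / sin z * (sin z / z) = cos z"
    using z sin_gt_zero[OF z] by simp
  also have "cos z = eval_fps (cosh_sqrt_fps (- (1/4))) T"
    using z_sq by (rule eval_cosh_sqrt_fps_neg[symmetric])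
  finally show "eval_fps (zeta_cot_fps * sinhc_sqrt_fps (- (1/4))) T = eval_fps (cosh_sqrt_fps (- (1/4))) T" .
qed simp_all

section \<open>The Euler operator and Hasse derivatives\<close>

definition fps_theta :: "'a::comm_ring_1 fps \<Rightarrow> 'a fps" where
  "fps_theta F = fps_X * fps_deriv F"

lemma fps_nth_fps_theta [simp]: "fps_nth (fps_theta F) n = of_nat n * fps_nth F n"
  by (cases n) (simp_all add: fps_theta_def)

lemma fps_theta_add: "fps_theta (F + G) = fps_theta F + fps_theta G"
  by (simp add: fps_theta_def algebra_simps)

lemma fps_theta_mult: "fps_theta (F * G) = fps_theta F * G + F * fps_theta G"
  by (simp add: fps_theta_def algebra_simps)

lemma fps_theta_const_mult: "fps_theta (fps_const c * F) = fps_const c * fps_theta F"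
  by (simp add: fps_theta_def algebra_simps)

lemma fps_theta_cosh_sqrt_fps:
  "fps_theta (cosh_sqrt_fps r) = fps_const (r / 2) * fps_X * sinhc_sqrt_fps r"
proof (rule fps_ext)
  fix m
  show "fps_nth (fps_theta (cosh_sqrt_fps r)) m = fps_nth (fps_const (r / 2) * fps_X * sinhc_sqrt_fps r) m"
  proof (cases m)
    case (Suc q)
    define F where "F = (fact (2 * q + 1) :: real)"
    have fact_eq: "fact (2 * m) = 2 * real m * F" and pow_eq: "r ^ m = r * r ^ q"
      and pred_eq: "m - 1 = q"
      by (simp_all add: Suc F_def algebra_simps)
    have "m \<noteq> 0" "F \<noteq> 0" by (simp_all add: Suc F_def)
    then show ?thesis
      unfolding fps_nth_fps_theta cosh_sqrt_fps_def sinhc_sqrt_fps_def fps_nth_Abs_fps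
        fps_mult_left_const_nth mult.assoc fps_X_mult_nth fact_eq pow_eq pred_eq F_def[symmetric]
      by (simp add: field_simps)
  qed (simp add: cosh_sqrt_fps_def)
qed

lemma fps_theta_sinhc_sqrt_fps:
  "fps_theta (sinhc_sqrt_fps r) = fps_const (1/2) * (cosh_sqrt_fps r - sinhc_sqrt_fps r)"
proof (rule fps_ext)
  fix m
  define F where "F = (fact (2 * m) :: real)"
  define B where "B = 2 * real m + 1"
  have fact_eq: "fact (2 * m + 1) = B * F" and m_eq: "real m = (B - 1) / 2"
    by (simp_all add: F_def B_def)
  have "B \<noteq> 0" "F \<noteq> 0" by (simp_all add: F_def B_def add_nonneg_eq_0_iff)
  then show "fps_nth (fps_theta (sinhc_sqrt_fps r)) m =
      fps_nth (fps_const (1/2) * (cosh_sqrt_fps r - sinhc_sqrt_fps r)) m"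
    unfolding fps_nth_fps_theta cosh_sqrt_fps_def sinhc_sqrt_fps_def fps_nth_Abs_fps
      fps_mult_left_const_nth fps_sub_nth fact_eq m_eq F_def[symmetric]
    by (simp add: field_simps)
qed

text \<open>\<open>hasse_fps K F\<close> is \<open>X\<^sup>K\<close> times the \<open>K\<close>-th Hasse derivative of \<open>F\<close>, i.e.
  \<open>X\<^sup>K F\<^bsup>(K)\<^esup> / K!\<close>.\<close>

definition hasse_fps :: "nat \<Rightarrow> 'a::comm_ring_1 fps \<Rightarrow> 'a fps" where
  "hasse_fps K F = Abs_fps (\<lambda>p. of_nat (p choose K) * fps_nth F p)"

lemma hasse_fps_0 [simp]: "hasse_fps 0 F = F"
  by (simp add: hasse_fps_def fps_eq_iff)

lemma fps_theta_hasse_fps: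
  "fps_theta (hasse_fps K F) =
     fps_const (of_nat (Suc K)) * hasse_fps (Suc K) F + fps_const (of_nat K) * hasse_fps K F"
proof (rule fps_ext)
  fix p
  have "p * (p choose K) = Suc K * (p choose Suc K) + K * (p choose K)"
  proof (cases "K \<le> p")
    case True
    then have "p * (p choose K) = (p - K) * (p choose K) + K * (p choose K)"
      by (simp add: add_mult_distrib[symmetric])
    moreover have "Suc K * (p choose Suc K) = (p - K) * (p choose K)"
      by (simp only: binomial_absorption binomial_absorb_comp)
    ultimately show ?thesis by simp
  qed (simp add: binomial_eq_0)
  then have "of_nat p * of_nat (p choose K) =
      (of_nat (Suc K) * of_nat (p choose Suc K) + of_nat K * of_nat (p choose K) :: 'a)"
    by (metis of_nat_add of_nat_mult)
  then show "fps_nth (fps_theta (hasse_fps K F)) p = fps_nth (fps_const (of_nat (Suc K)) *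
      hasse_fps (Suc K) F + fps_const (of_nat K) * hasse_fps K F) p"
    by (simp add: hasse_fps_def mult.assoc[symmetric] distrib_right del: of_nat_Suc)
qed

lemma hasse_fps_Suc_scaled:
  fixes F :: "real fps"
  shows "fps_const (a ^ Suc K * fact (Suc K)) * hasse_fps (Suc K) F =
    fps_const a * (fps_theta (fps_const (a ^ K * fact K) * hasse_fps K F)
      - fps_const (real K) * (fps_const (a ^ K * fact K) * hasse_fps K F))"
proof -
  have "fps_const (a ^ Suc K * fact (Suc K)) * hasse_fps (Suc K) F =
      fps_const a * fps_const (a ^ K * fact K) * (fps_const (real (Suc K)) * hasse_fps (Suc K) F)"
    by (simp add: algebra_simps flip: fps_const_mult)
  also have "fps_const (real (Suc K)) * hasse_fps (Suc K) F =
      fps_theta (hasse_fps K F) - fps_const (real K) * hasse_fps K F"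
    using fps_theta_hasse_fps[of K F] by simp
  also have "fps_const a * fps_const (a ^ K * fact K) *
      (fps_theta (hasse_fps K F) - fps_const (real K) * hasse_fps K F) =
    fps_const a * (fps_theta (fps_const (a ^ K * fact K) * hasse_fps K F)
      - fps_const (real K) * (fps_const (a ^ K * fact K) * hasse_fps K F))"
    unfolding fps_theta_const_mult by (simp add: algebra_simps flip: fps_const_mult)
  finally show ?thesis .
qed

lemma fps_theta_cosh_sinhc_combination:
  "fps_theta (P * cosh_sqrt_fps r + R * sinhc_sqrt_fps r) =
    (fps_theta P + fps_const (1/2) * R) * cosh_sqrt_fps r +
    (fps_theta R - fps_const (1/2) * R + fps_const (r / 2) * fps_X * P) * sinhc_sqrt_fps r"
  by (simp add: fps_theta_add fps_theta_mult fps_theta_cosh_sqrt_fps fps_theta_sinhc_sqrt_fps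
      algebra_simps)

definition hasse_cos_coeff :: "nat \<Rightarrow> nat \<Rightarrow> real" where
  "hasse_cos_coeff K i =
     (if 1 \<le> i \<and> i \<le> K then fact (2 * K - 1 - i) / (fact (K - i) * fact (i - 1)) else 0)"

lemma hasse_cos_coeff_eq:
  "hasse_cos_coeff (a + b + 1) (b + 1) = fact (2 * a + b) / (fact a * fact b)"
proof -
  have "2 * (a + b + 1) - 1 - (b + 1) = 2 * a + b" by simp
  then show ?thesis by (simp add: hasse_cos_coeff_def ac_simps)
qed

lemma hasse_cos_coeff_Suc_interior:
  "hasse_cos_coeff (a + b + 2) (b + 1) =
    (4 * real (a + b + 1) - 2 * real (b + 1)) * hasse_cos_coeff (a + b + 1) (b + 1) +
    hasse_cos_coeff (a + b + 1) b"
proof -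
  define A where "A = (fact a :: real)"
  define B where "B = (fact b :: real)"
  define F where "F = (fact (2 * a + b) :: real)"
  define Q where "Q = F / ((real a + 1) * A * B)"
  have fact_a: "fact (a + 1) = (real a + 1) * A" by (simp add: A_def)
  have "hasse_cos_coeff (a + b + 2) (b + 1) = hasse_cos_coeff ((a + 1) + b + 1) (b + 1)"
    by (simp add: ac_simps)
  also have "\<dots> = fact (2 * a + b + 2) / (fact (a + 1) * fact b)"
    unfolding hasse_cos_coeff_eq by (simp add: algebra_simps)
  also have "fact (2 * a + b + 2) = (2 * real a + real b + 2) * (2 * real a + real b + 1) * F"
    by (simp add: F_def algebra_simps)
  finally have lhs: "hasse_cos_coeff (a + b + 2) (b + 1) =
      (2 * real a + real b + 2) * (2 * real a + real b + 1) * Q"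
    by (simp add: Q_def A_def B_def)
  have mid: "hasse_cos_coeff (a + b + 1) (b + 1) = (real a + 1) * Q"
    unfolding hasse_cos_coeff_eq by (simp add: Q_def A_def B_def F_def add_nonneg_eq_0_iff)
  have prev: "hasse_cos_coeff (a + b + 1) b = real b * (2 * real a + real b + 1) * Q"
  proof (cases b)
    case (Suc c)
    have "hasse_cos_coeff (a + b + 1) b = hasse_cos_coeff ((a + 1) + c + 1) (c + 1)"
      by (simp add: Suc)
    also have "\<dots> = fact (2 * a + b + 1) / (fact (a + 1) * fact c)"
      unfolding hasse_cos_coeff_eq by (simp add: Suc algebra_simps)
    also have "fact (2 * a + b + 1) = (2 * real a + real b + 1) * F"
      by (simp add: F_def)
    also have "fact c = B / real b" by (simp add: B_def Suc)
    finally show ?thesis using Suc by (simp add: Q_def A_def ac_simps)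
  qed (simp add: hasse_cos_coeff_def)
  show ?thesis
    unfolding lhs mid prev by (simp add: algebra_simps)
qed

lemma hasse_cos_coeff_Suc:
  assumes "K \<ge> 1"
  shows "hasse_cos_coeff (Suc K) i =
    (4 * real K - 2 * real i) * hasse_cos_coeff K i + hasse_cos_coeff K (i - 1)"
proof -
  consider "i = 0" | "1 \<le> i" "i \<le> K" | "i = Suc K" | "i > Suc K" by linarith
  then show ?thesis
  proof cases
    case 2
    obtain a b where ab: "K = a + b + 1" "i = b + 1"
      using 2 by (intro that[of "K - i" "i - 1"]) auto
    show ?thesis using hasse_cos_coeff_Suc_interior[of a b] by (simp add: ab)
  qed (use assms in \<open>auto simp: hasse_cos_coeff_def\<close>)
qed

text \<open>The polynomials with \<open>(-4T)\<^sup>K (d/dT)\<^sup>K cos z = hasse_cos_part K \<cdot> cos z +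
  hasse_sin_part K \<cdot> sin z / z\<close>, where \<open>z = \<surd>T / 2\<close>.\<close>

definition hasse_cos_part :: "nat \<Rightarrow> real fps" where
  "hasse_cos_part K = Abs_fps (\<lambda>j. (- 1) ^ j * hasse_cos_coeff K (2 * j))"

definition hasse_sin_part :: "nat \<Rightarrow> real fps" where
  "hasse_sin_part K = Abs_fps (\<lambda>j. (- 1) ^ (j + 1) * hasse_cos_coeff K (2 * j - 1) / 2)"

lemma hasse_cos_part_Suc:
  assumes "K \<ge> 1"
  shows "hasse_cos_part (Suc K) = fps_const (- 4) * (fps_theta (hasse_cos_part K)
    - fps_const (real K) * hasse_cos_part K + fps_const (1/2) * hasse_sin_part K)"
proof (rule fps_ext)
  fix j
  show "fps_nth (hasse_cos_part (Suc K)) j = fps_nth (fps_const (- 4) * (fps_theta (hasse_cos_part K)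
    - fps_const (real K) * hasse_cos_part K + fps_const (1/2) * hasse_sin_part K)) j"
    by (simp add: hasse_cos_part_def hasse_sin_part_def hasse_cos_coeff_Suc[OF assms] algebra_simps)
qed

lemma hasse_sin_part_Suc:
  assumes "K \<ge> 1"
  shows "hasse_sin_part (Suc K) = fps_const (- 4) * (fps_theta (hasse_sin_part K)
    - fps_const (real K) * hasse_sin_part K - fps_const (1/2) * hasse_sin_part K
    - fps_const (1/8) * fps_X * hasse_cos_part K)"
proof (rule fps_ext)
  fix j
  show "fps_nth (hasse_sin_part (Suc K)) j = fps_nth (fps_const (- 4) * (fps_theta (hasse_sin_part K)
    - fps_const (real K) * hasse_sin_part K - fps_const (1/2) * hasse_sin_part K
    - fps_const (1/8) * fps_X * hasse_cos_part K)) j"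
  proof (cases j)
    case (Suc l)
    then show ?thesis
      by (simp add: hasse_cos_part_def hasse_sin_part_def hasse_cos_coeff_Suc[OF assms] algebra_simps)
        (simp add: field_simps)
  qed (simp add: hasse_cos_part_def hasse_sin_part_def hasse_cos_coeff_def)
qed

lemma hasse_parts_Suc:
  assumes "K \<ge> 1"
  shows "hasse_cos_part (Suc K) * cosh_sqrt_fps (- (1/4)) + hasse_sin_part (Suc K) * sinhc_sqrt_fps (- (1/4)) =
    fps_const (- 4) * (fps_theta (hasse_cos_part K * cosh_sqrt_fps (- (1/4)) +
        hasse_sin_part K * sinhc_sqrt_fps (- (1/4))) -
      fps_const (real K) * (hasse_cos_part K * cosh_sqrt_fps (- (1/4)) +
        hasse_sin_part K * sinhc_sqrt_fps (- (1/4))))"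
proof -
  define A where "A = fps_theta (hasse_cos_part K) - fps_const (real K) * hasse_cos_part K
    + fps_const (1/2) * hasse_sin_part K"
  define B where "B = fps_theta (hasse_sin_part K) - fps_const (real K) * hasse_sin_part K
    - fps_const (1/2) * hasse_sin_part K - fps_const (1/8) * fps_X * hasse_cos_part K"
  have "hasse_cos_part (Suc K) * cosh_sqrt_fps (- (1/4)) + hasse_sin_part (Suc K) * sinhc_sqrt_fps (- (1/4)) =
      fps_const (- 4) * A * cosh_sqrt_fps (- (1/4)) + fps_const (- 4) * B * sinhc_sqrt_fps (- (1/4))"
    by (simp only: hasse_cos_part_Suc[OF assms] hasse_sin_part_Suc[OF assms] A_def B_def)
  also have "\<dots> = fps_const (- 4) * (A * cosh_sqrt_fps (- (1/4)) + B * sinhc_sqrt_fps (- (1/4)))"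
    by (simp add: algebra_simps)
  also have "A * cosh_sqrt_fps (- (1/4)) + B * sinhc_sqrt_fps (- (1/4)) =
      fps_theta (hasse_cos_part K * cosh_sqrt_fps (- (1/4)) + hasse_sin_part K * sinhc_sqrt_fps (- (1/4))) -
      fps_const (real K) * (hasse_cos_part K * cosh_sqrt_fps (- (1/4)) +
        hasse_sin_part K * sinhc_sqrt_fps (- (1/4)))"
    by (simp add: A_def B_def fps_theta_cosh_sinhc_combination algebra_simps flip: fps_const_neg)
  finally show ?thesis .
qed

lemma hasse_fps_cosh_sqrt_fps_decomp:
  assumes "K \<ge> 1"
  shows "fps_const ((- 4) ^ K * fact K) * hasse_fps K (cosh_sqrt_fps (- (1/4))) =
    hasse_cos_part K * cosh_sqrt_fps (- (1/4)) + hasse_sin_part K * sinhc_sqrt_fps (- (1/4))"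
  using assms
proof (induction K rule: dec_induct)
  case base
  have "hasse_fps 1 (cosh_sqrt_fps (- (1/4))) = fps_theta (cosh_sqrt_fps (- (1/4)))"
    using fps_theta_hasse_fps[of 0 "cosh_sqrt_fps (- (1/4))"] by simp
  moreover have "hasse_cos_part 1 = 0" "hasse_sin_part 1 = fps_const (1/2) * fps_X"
    by (auto simp: fps_eq_iff hasse_cos_part_def hasse_sin_part_def hasse_cos_coeff_def le_Suc_eq)
  ultimately show ?case
    by (simp add: fps_theta_cosh_sqrt_fps mult.assoc[symmetric] flip: fps_const_mult)
next
  case (step K)
  show ?case
    unfolding hasse_fps_Suc_scaled step.IH by (rule hasse_parts_Suc[symmetric, OF step.hyps(1)])
qed

lemma inverse_sinhc_mult_hasse_fps_cosh:
  assumes "K \<ge> 1"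
  shows "inverse (sinhc_sqrt_fps (- (1/4))) *
      (fps_const ((- 4) ^ K * fact K) * hasse_fps K (cosh_sqrt_fps (- (1/4)))) =
    hasse_cos_part K * zeta_cot_fps + hasse_sin_part K"
proof -
  define S where "S = sinhc_sqrt_fps (- (1/4))"
  have S_inv: "inverse S * S = 1"
    by (intro inverse_mult_eq_1) (simp add: S_def)
  have "inverse S * cosh_sqrt_fps (- (1/4)) = inverse S * (zeta_cot_fps * S)"
    by (simp only: S_def zeta_cot_fps_mult_sinhc_sqrt_fps)
  also have "\<dots> = zeta_cot_fps" by (metis S_inv mult.left_commute mult_1_right)
  finally have C_div_S: "inverse S * cosh_sqrt_fps (- (1/4)) = zeta_cot_fps" .
  have "inverse S * (hasse_cos_part K * cosh_sqrt_fps (- (1/4)) + hasse_sin_part K * S) =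
      hasse_cos_part K * (inverse S * cosh_sqrt_fps (- (1/4))) + hasse_sin_part K * (inverse S * S)"
    by (simp add: algebra_simps)
  then show ?thesis
    unfolding hasse_fps_cosh_sqrt_fps_decomp[OF assms] S_def[symmetric] C_div_S S_inv by simp
qed

lemma fps_nth_hasse_sin_part_eq_0:
  assumes "K < 2 * n - 1"
  shows "fps_nth (hasse_sin_part K) n = 0"
  using assms by (simp add: hasse_sin_part_def hasse_cos_coeff_def)

lemma fps_nth_hasse_cos_part_mult_zeta_cot_fps:
  assumes "K \<le> n"
  shows "fps_nth (hasse_cos_part K * zeta_cot_fps) n =
    2 * (\<Sum>j<K div 2. (- 1) ^ j * hasse_cos_coeff K (2 * j + 2) *
      riemann_zeta (real (2 * (n - Suc j))) / (2 * pi) ^ (2 * (n - Suc j)))"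
proof -
  have "fps_nth (hasse_cos_part K * zeta_cot_fps) n =
      (\<Sum>i=0..n. fps_nth (hasse_cos_part K) i * fps_nth zeta_cot_fps (n - i))"
    by (rule fps_mult_nth)
  also have "\<dots> = (\<Sum>i\<in>Suc ` {..<K div 2}. fps_nth (hasse_cos_part K) i * fps_nth zeta_cot_fps (n - i))"
  proof (rule sum.mono_neutral_right)
    show "Suc ` {..<K div 2} \<subseteq> {0..n}" using assms by auto
    have "i \<in> Suc ` {..<K div 2}" if "1 \<le> 2 * i" "2 * i \<le> K" for i
    proof (rule image_eqI)
      show "i = Suc (i - 1)" using that by simp
      show "i - 1 \<in> {..<K div 2}" unfolding lessThan_iff using that by presburger
    qed
    then have "hasse_cos_coeff K (2 * i) = 0" if "i \<notin> Suc ` {..<K div 2}" for i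
      using that by (auto simp: hasse_cos_coeff_def)
    then show "\<forall>i\<in>{0..n} - Suc ` {..<K div 2}. fps_nth (hasse_cos_part K) i * fps_nth zeta_cot_fps (n - i) = 0"
      by (simp add: hasse_cos_part_def)
  qed simp
  also have "\<dots> = (\<Sum>j<K div 2. fps_nth (hasse_cos_part K) (Suc j) * fps_nth zeta_cot_fps (n - Suc j))"
    by (simp add: sum.reindex)
  also have "\<dots> = (\<Sum>j<K div 2. 2 * ((- 1) ^ j * hasse_cos_coeff K (2 * j + 2) *
      riemann_zeta (real (2 * (n - Suc j))) / (2 * pi) ^ (2 * (n - Suc j))))"
  proof (rule sum.cong)
    fix j assume "j \<in> {..<K div 2}"
    then have "n - Suc j \<noteq> 0" using assms by auto
    then show "fps_nth (hasse_cos_part K) (Suc j) * fps_nth zeta_cot_fps (n - Suc j) =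
        2 * ((- 1) ^ j * hasse_cos_coeff K (2 * j + 2) *
        riemann_zeta (real (2 * (n - Suc j))) / (2 * pi) ^ (2 * (n - Suc j)))"
      by (simp add: hasse_cos_part_def zeta_cot_fps_def)
  qed simp
  finally show ?thesis by (simp add: sum_distrib_left)
qed

section \<open>Knuth's coefficients\<close>

lemma add_one_power_diff_eq_sum:
  fixes s :: "'a::comm_ring_1"
  assumes "m \<le> N"
  shows "(s + 1) ^ m - s ^ m = (\<Sum>K=1..N. of_nat (m choose K) * s ^ (m - K))"
proof -
  have "(s + 1) ^ m = (\<Sum>K=0..m. of_nat (m choose K) * s ^ (m - K))"
    using binomial_ring[of 1 s m] by (simp add: add.commute atLeast0AtMost)
  also have "\<dots> = s ^ m + (\<Sum>K=1..m. of_nat (m choose K) * s ^ (m - K))"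
    by (simp add: sum.atLeast_Suc_atMost)
  also have "(\<Sum>K=1..m. of_nat (m choose K) * s ^ (m - K)) = (\<Sum>K=1..N. of_nat (m choose K) * s ^ (m - K))"
    using assms by (intro sum.mono_neutral_left) (auto simp: binomial_eq_0)
  finally show ?thesis by simp
qed

lemma eval_fps_inverse:
  fixes F :: "'a::{banach, real_normed_field} fps"
  assumes "fps_nth F 0 \<noteq> 0" "norm T < fps_conv_radius (inverse F)" "norm T < fps_conv_radius F"
  shows "eval_fps (inverse F) T = inverse (eval_fps F T)"
proof -
  have "eval_fps F T * eval_fps (inverse F) T = eval_fps (F * inverse F) T"
    using assms by (simp add: eval_fps_mult)
  also have "F * inverse F = 1" using assms(1) by (rule inverse_mult_eq_1')
  finally show ?thesis by (intro inverse_unique[symmetric]) simp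
qed

definition faulhaber_A_explicit :: "nat \<Rightarrow> nat \<Rightarrow> real" where
  "faulhaber_A_explicit n k =
     (if n = 0 \<or> n \<le> k then 0
      else fact (2 * n) / 4 ^ k *
        fps_nth (inverse (sinhc_sqrt_fps 1) * hasse_fps (n - k) (cosh_sqrt_fps 1)) n)"

lemma fps_nth_inverse_sinhc_mult_hasse_fps:
  "fps_nth (inverse (sinhc_sqrt_fps r) * hasse_fps K (cosh_sqrt_fps r)) n =
    r ^ n * fps_nth (inverse (sinhc_sqrt_fps 1) * hasse_fps K (cosh_sqrt_fps 1)) n"
proof -
  have "r ^ i * r ^ (n - i) = r ^ n" if "i \<in> {0..n}" for i
    using that by (simp flip: power_add)
  then show ?thesis
    by (auto simp: fps_mult_nth fps_nth_inverse_sinhc_sqrt_fps[of r] hasse_fps_def cosh_sqrt_fps_def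
        sum_distrib_left mult_ac intro!: sum.cong)
qed

lemma fps_nth_faulhaber_series:
  "fps_nth (inverse (sinhc_sqrt_fps (y / 4)) * (cosh_sqrt_fps (y / 4 + 1) - cosh_sqrt_fps (y / 4))) n =
    (\<Sum>k<n. faulhaber_A_explicit n k * y ^ k) / fact (2 * n)"
proof -
  define s where "s = y / 4"
  define c where "c l = fps_nth (inverse (sinhc_sqrt_fps 1)) l" for l
  define h where "h K = fps_nth (inverse (sinhc_sqrt_fps 1) * hasse_fps K (cosh_sqrt_fps 1)) n" for K
  have h_eq: "h K = (\<Sum>l=0..n. c l * (of_nat (n - l choose K) / fact (2 * (n - l))))" for K
    by (simp add: h_def c_def fps_mult_nth hasse_fps_def cosh_sqrt_fps_def)
  have "fps_nth (inverse (sinhc_sqrt_fps s) * (cosh_sqrt_fps (s + 1) - cosh_sqrt_fps s)) n =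
      (\<Sum>l=0..n. s ^ l * c l * (((s + 1) ^ (n - l) - s ^ (n - l)) / fact (2 * (n - l))))"
    by (simp add: fps_mult_nth fps_nth_inverse_sinhc_sqrt_fps[of s] c_def cosh_sqrt_fps_def
        diff_divide_distrib)
  also have "\<dots> = (\<Sum>l=0..n. \<Sum>K=1..n. s ^ (n - K) * (c l * (of_nat (n - l choose K) / fact (2 * (n - l)))))"
  proof (rule sum.cong)
    fix l assume "l \<in> {0..n}"
    have pow: "s ^ l * s ^ (n - l - K) * of_nat (n - l choose K) = s ^ (n - K) * of_nat (n - l choose K)"
      for K using \<open>l \<in> {0..n}\<close>
      by (cases "K \<le> n - l") (simp_all add: binomial_eq_0 flip: power_add)
    have "s ^ l * c l * (((s + 1) ^ (n - l) - s ^ (n - l)) / fact (2 * (n - l))) =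
        (\<Sum>K=1..n. s ^ l * s ^ (n - l - K) * of_nat (n - l choose K) * (c l / fact (2 * (n - l))))"
      by (simp add: add_one_power_diff_eq_sum[of "n - l" n] sum_distrib_left sum_distrib_right
          sum_divide_distrib mult_ac)
    also have "\<dots> = (\<Sum>K=1..n. s ^ (n - K) * (c l * (of_nat (n - l choose K) / fact (2 * (n - l)))))"
      by (simp only: pow) (simp add: mult_ac)
    finally show "s ^ l * c l * (((s + 1) ^ (n - l) - s ^ (n - l)) / fact (2 * (n - l))) =
        (\<Sum>K=1..n. s ^ (n - K) * (c l * (of_nat (n - l choose K) / fact (2 * (n - l)))))" .
  qed simp
  also have "\<dots> = (\<Sum>K=1..n. s ^ (n - K) * h K)"
    by (subst sum.swap) (simp add: h_eq sum_distrib_left)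
  also have "\<dots> = (\<Sum>k<n. s ^ k * h (n - k))"
    by (rule sum.reindex_bij_witness[of _ "\<lambda>k. n - k" "\<lambda>K. n - K"]) auto
  also have "\<dots> = (\<Sum>k<n. faulhaber_A_explicit n k * y ^ k) / fact (2 * n)"
    by (auto simp: sum_divide_distrib faulhaber_A_explicit_def h_def s_def power_divide intro!: sum.cong)
  finally show ?thesis by (simp add: s_def)
qed

lemma eval_faulhaber_fps:
  assumes "y > 0" and radius: "ereal (x\<^sup>2) < fps_conv_radius (inverse (sinhc_sqrt_fps (y / 4)))"
  shows "eval_fps (inverse (sinhc_sqrt_fps (y / 4)) * (cosh_sqrt_fps (y / 4 + 1) - cosh_sqrt_fps (y / 4)))
    (x\<^sup>2) = faulhaber_gf x y"
proof (cases "x = 0")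
  case True
  then show ?thesis by (simp add: eval_fps_at_0 faulhaber_gf_def cosh_sqrt_fps_def)
next
  case False
  define u where "u = x * sqrt y / 2"
  define v where "v = x * sqrt (y + 4) / 2"
  have "u \<noteq> 0" "sinh u \<noteq> 0" using False \<open>y > 0\<close> by (simp_all add: u_def)
  have u_sq: "u\<^sup>2 = y / 4 * x\<^sup>2" and v_sq: "v\<^sup>2 = (y / 4 + 1) * x\<^sup>2"
    using \<open>y > 0\<close> by (simp_all add: u_def v_def power_mult_distrib power_divide)
  have "eval_fps (inverse (sinhc_sqrt_fps (y / 4))) (x\<^sup>2) =
      inverse (eval_fps (sinhc_sqrt_fps (y / 4)) (x\<^sup>2))"
    by (rule eval_fps_inverse) (use radius in simp_all)
  then have "eval_fps (inverse (sinhc_sqrt_fps (y / 4))) (x\<^sup>2) = inverse (sinh u / u)"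
    using eval_sinhc_sqrt_fps[OF u_sq \<open>u \<noteq> 0\<close>] by simp
  moreover have "eval_fps (cosh_sqrt_fps (y / 4 + 1) - cosh_sqrt_fps (y / 4)) (x\<^sup>2) = cosh v - cosh u"
    using eval_cosh_sqrt_fps[OF u_sq] eval_cosh_sqrt_fps[OF v_sq] by (simp add: eval_fps_diff)
  ultimately show ?thesis
    using radius \<open>sinh u \<noteq> 0\<close> fps_conv_radius_diff[of "cosh_sqrt_fps (y / 4 + 1)" "cosh_sqrt_fps (y / 4)"]
    by (simp add: eval_fps_mult faulhaber_gf_def u_def v_def)
qed

lemma faulhaber_gf_sums:
  assumes "y > 0"
  shows "\<exists>e>0. \<forall>x. \<bar>x\<bar> < e \<longrightarrow>
    (\<lambda>n. \<Sum>k<n. x ^ (2 * n) / fact (2 * n) * faulhaber_A_explicit n k * y ^ k) sums faulhaber_gf x y"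
proof -
  define H where "H = inverse (sinhc_sqrt_fps (y / 4)) * (cosh_sqrt_fps (y / 4 + 1) - cosh_sqrt_fps (y / 4))"
  have "fps_conv_radius (inverse (sinhc_sqrt_fps (y / 4))) > 0"
    by (intro fps_conv_radius_inverse_pos) simp_all
  then obtain r where r: "0 < ereal r" "ereal r < fps_conv_radius (inverse (sinhc_sqrt_fps (y / 4)))"
    using ereal_dense2 by blast
  show ?thesis
  proof (intro exI conjI allI impI)
    show "sqrt r > 0" using r by simp
    fix x :: real assume "\<bar>x\<bar> < sqrt r"
    then have "\<bar>x\<bar>\<^sup>2 < (sqrt r)\<^sup>2" by (intro power_strict_mono) auto
    then have x_radius: "ereal (x\<^sup>2) < fps_conv_radius (inverse (sinhc_sqrt_fps (y / 4)))"
      using r by (auto intro: order.strict_trans1[OF _ r(2)])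
    have "fps_conv_radius (inverse (sinhc_sqrt_fps (y / 4))) \<le> fps_conv_radius H"
      using fps_conv_radius_mult[of "inverse (sinhc_sqrt_fps (y / 4))"
          "cosh_sqrt_fps (y / 4 + 1) - cosh_sqrt_fps (y / 4)"]
        fps_conv_radius_diff[of "cosh_sqrt_fps (y / 4 + 1)" "cosh_sqrt_fps (y / 4)"]
      by (simp add: H_def)
    then have H_radius: "ereal (norm (x\<^sup>2)) < fps_conv_radius H"
      using order.strict_trans2[OF x_radius] by simp
    have "eval_fps H (x\<^sup>2) = faulhaber_gf x y"
      unfolding H_def using \<open>y > 0\<close> x_radius by (rule eval_faulhaber_fps)
    with sums_eval_fps[OF H_radius] have "(\<lambda>n. fps_nth H n * (x\<^sup>2) ^ n) sums faulhaber_gf x y"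
      by simp
    moreover have "fps_nth H n * (x\<^sup>2) ^ n =
        (\<Sum>k<n. x ^ (2 * n) / fact (2 * n) * faulhaber_A_explicit n k * y ^ k)" for n
    proof -
      have "x ^ (2 * n) = (x\<^sup>2) ^ n" by (simp add: power_mult)
      then show ?thesis unfolding H_def fps_nth_faulhaber_series
        by (simp add: sum_divide_distrib sum_distrib_left mult_ac)
    qed
    ultimately show "(\<lambda>n. \<Sum>k<n. x ^ (2 * n) / fact (2 * n) * faulhaber_A_explicit n k * y ^ k) sums
        faulhaber_gf x y" by simp
  qed
qed

lemma even_double_powser_unique:
  fixes A B :: "nat \<Rightarrow> nat \<Rightarrow> real"
  assumes A: "\<And>y. y > 0 \<Longrightarrow> \<exists>e>0. \<forall>x. \<bar>x\<bar> < e \<longrightarrow>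
      (\<lambda>n. \<Sum>k<n. x ^ (2 * n) / fact (2 * n) * A n k * y ^ k) sums g x y"
    and B: "\<And>y. y > 0 \<Longrightarrow> \<exists>e>0. \<forall>x. \<bar>x\<bar> < e \<longrightarrow>
      (\<lambda>n. \<Sum>k<n. x ^ (2 * n) / fact (2 * n) * B n k * y ^ k) sums g x y"
    and "k < n"
  shows "A n k = B n k"
proof -
  define c where "c n k = (A n k - B n k) / fact (2 * n)" for n k
  have "c n k = 0"
  proof (rule even_double_powser_coeff_zero[OF _ \<open>k < n\<close>])
    fix y :: real assume "y > 0"
    obtain e1 where "e1 > 0" and e1: "\<And>x. \<bar>x\<bar> < e1 \<Longrightarrow>
        (\<lambda>n. \<Sum>k<n. x ^ (2 * n) / fact (2 * n) * A n k * y ^ k) sums g x y"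
      using A[OF \<open>y > 0\<close>] by blast
    obtain e2 where "e2 > 0" and e2: "\<And>x. \<bar>x\<bar> < e2 \<Longrightarrow>
        (\<lambda>n. \<Sum>k<n. x ^ (2 * n) / fact (2 * n) * B n k * y ^ k) sums g x y"
      using B[OF \<open>y > 0\<close>] by blast
    have "(\<lambda>n. \<Sum>k<n. x ^ (2 * n) * c n k * y ^ k) sums 0" if "\<bar>x\<bar> < min e1 e2" for x
    proof -
      have "(\<lambda>n. (\<Sum>k<n. x ^ (2 * n) / fact (2 * n) * A n k * y ^ k) -
          (\<Sum>k<n. x ^ (2 * n) / fact (2 * n) * B n k * y ^ k)) sums (g x y - g x y)"
        using that by (intro sums_diff e1 e2) auto
      moreover have "x ^ (2 * n) / fact (2 * n) * A n k * y ^ k - x ^ (2 * n) / fact (2 * n) * B n k * y ^ k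
          = x ^ (2 * n) * c n k * y ^ k" for n k
        by (simp add: c_def diff_divide_distrib algebra_simps)
      ultimately show ?thesis by (simp add: sum_subtractf[symmetric])
    qed
    then show "\<exists>e>0. \<forall>x. \<bar>x\<bar> < e \<longrightarrow> (\<lambda>n. \<Sum>k<n. x ^ (2 * n) * c n k * y ^ k) sums 0"
      using \<open>e1 > 0\<close> \<open>e2 > 0\<close> by (intro exI[of _ "min e1 e2"]) auto
  qed
  then show ?thesis by (simp add: c_def)
qed

lemma faulhaber_A_eq_explicit: "faulhaber_A = faulhaber_A_explicit"
  unfolding faulhaber_A_def
proof (rule the_equality)
  show "(\<forall>n k. (n = 0 \<or> n \<le> k) \<longrightarrow> faulhaber_A_explicit n k = 0) \<and>
    (\<forall>y>0. \<exists>e>0. \<forall>x. \<bar>x\<bar> < e \<longrightarrow>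
      (\<lambda>n. \<Sum>k<n. x ^ (2 * n) / fact (2 * n) * faulhaber_A_explicit n k * y ^ k) sums faulhaber_gf x y)"
    using faulhaber_gf_sums by (auto simp: faulhaber_A_explicit_def)
next
  fix A assume A: "(\<forall>n k. (n = 0 \<or> n \<le> k) \<longrightarrow> A n k = 0) \<and>
    (\<forall>y>0. \<exists>e>0. \<forall>x. \<bar>x\<bar> < e \<longrightarrow>
      (\<lambda>n. \<Sum>k<n. x ^ (2 * n) / fact (2 * n) * A n k * y ^ k) sums faulhaber_gf x y)"
  show "A = faulhaber_A_explicit"
  proof (intro ext)
    fix n k
    show "A n k = faulhaber_A_explicit n k"
    proof (cases "n = 0 \<or> n \<le> k")
      case True
      moreover from A True have "A n k = 0" by blast
      ultimately show ?thesis by (simp add: faulhaber_A_explicit_def)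
    next
      case False
      with A faulhaber_gf_sums show ?thesis
        by (intro even_double_powser_unique[where g = faulhaber_gf]) auto
    qed
  qed
qed

lemma faulhaber_b_eq_hasse_cos_part_coeff:
  assumes "2 \<le> k" "k \<le> n"
  shows "faulhaber_b n k =
    fact (2 * n) * fact k / fact (2 * k + 1) * fps_nth (hasse_cos_part k * zeta_cot_fps) n"
proof -
  define Q where "Q = fps_nth (hasse_cos_part k * zeta_cot_fps) n"
  define H where "H = fps_nth (inverse (sinhc_sqrt_fps 1) * hasse_fps k (cosh_sqrt_fps 1)) n"
  obtain m where m: "n = m + k" using assms(2) by (metis le_add_diff_inverse2)
  have "fps_nth (inverse (sinhc_sqrt_fps (- (1/4))) *
      (fps_const ((- 4) ^ k * fact k) * hasse_fps k (cosh_sqrt_fps (- (1/4))))) n = Q"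
    unfolding inverse_sinhc_mult_hasse_fps_cosh[OF order.trans[OF one_le_numeral assms(1)]]
    using fps_nth_hasse_sin_part_eq_0[of k n] assms by (simp add: Q_def)
  moreover have "inverse (sinhc_sqrt_fps (- (1/4))) *
      (fps_const ((- 4) ^ k * fact k) * hasse_fps k (cosh_sqrt_fps (- (1/4)))) =
    fps_const ((- 4) ^ k * fact k) * (inverse (sinhc_sqrt_fps (- (1/4))) * hasse_fps k (cosh_sqrt_fps (- (1/4))))"
    by (rule mult.left_commute)
  ultimately have "(- 4) ^ k * fact k * ((- (1/4)) ^ n * H) = Q"
    by (simp only: fps_mult_left_const_nth fps_nth_inverse_sinhc_mult_hasse_fps[of "- (1/4)"]
        H_def[symmetric])
  then have "Q = fact k * ((- 4) ^ k * (- (1/4)) ^ n) * H"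
    by (simp add: mult_ac)
  also have "(- 4 :: real) ^ k * (- (1/4)) ^ n = ((- 4) * (- (1/4))) ^ k * (- (1/4)) ^ m"
    unfolding m power_add power_mult_distrib by (simp only: mult_ac)
  also have "(- (1/4) :: real) ^ m = (- 1) ^ m / 4 ^ m"
    by (subst power_divide[symmetric]) simp
  finally have Q_eq: "Q = fact k * (- 1) ^ m / 4 ^ m * H"
    by simp
  have "n - k = m" by (simp add: m)
  have A_eq: "faulhaber_A n m = fact (2 * n) / 4 ^ m * H"
    using assms by (simp add: faulhaber_A_eq_explicit faulhaber_A_explicit_def m H_def)
  show ?thesis
    unfolding faulhaber_b_def Q_def[symmetric] Q_eq \<open>n - k = m\<close> A_eq
    by (simp add: power2_eq_square field_simps del: fact_Suc)
qed

lemma Gamma_eq_fact: "x = real m + 1 \<Longrightarrow> Gamma x = fact m"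
  using Gamma_fact[of m] by (simp add: add.commute)

lemma hasse_cos_coeff_eq_Gamma:
  assumes "2 * j + 2 \<le> k"
  shows "hasse_cos_coeff k (2 * j + 2) =
    Gamma (2 * real k - 2 - 2 * real j) / (Gamma (real k - 1 - 2 * real j) * Gamma (2 * real j + 2))"
proof -
  have "Gamma (2 * real k - 2 - 2 * real j) = fact (2 * k - 1 - (2 * j + 2))"
    using assms by (intro Gamma_eq_fact) (simp add: of_nat_diff)
  moreover have "Gamma (real k - 1 - 2 * real j) = fact (k - (2 * j + 2))"
    using assms by (intro Gamma_eq_fact) (simp add: of_nat_diff)
  moreover have "Gamma (2 * real j + 2) = fact (2 * j + 2 - 1)"
    by (intro Gamma_eq_fact) simp
  ultimately show ?thesis using assms by (simp add: hasse_cos_coeff_def)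
qed

lemma Gamma_ratio_eq_fact:
  "4 * Gamma (2 * real n + 1) * Gamma (real k + 2) / Gamma (2 * real k + 3) =
    2 * fact (2 * n) * fact k / fact (2 * k + 1)"
proof -
  have G1: "Gamma (2 * real n + 1) = fact (2 * n)" by (rule Gamma_eq_fact) simp
  have G2: "Gamma (real k + 2) = (real k + 1) * fact k"
    using Gamma_eq_fact[of "real k + 2" "k + 1"] by simp
  have "Gamma (2 * real k + 3) = fact (2 * k + 2)" by (rule Gamma_eq_fact) simp
  then have G3: "Gamma (2 * real k + 3) = 2 * (real k + 1) * fact (2 * k + 1)"
    by (simp add: algebra_simps)
  have cancel: "4 * a * (c * b) / (2 * c * d) = 2 * a * b / d" if "c \<noteq> 0" for a b c d :: real
    using that by (simp add: field_simps)
  show ?thesis unfolding G1 G2 G3 by (rule cancel) (simp add: add_nonneg_eq_0_iff)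
qed

lemma faulhaber_b_eq_zeta_sum:
  assumes "2 \<le> k" "k \<le> n"
  shows "faulhaber_b n k = 2 * fact (2 * n) * fact k / fact (2 * k + 1) *
    (\<Sum>j<k div 2. (- 1) ^ j * hasse_cos_coeff k (2 * j + 2) *
      riemann_zeta (real (2 * (n - Suc j))) / (2 * pi) ^ (2 * (n - Suc j)))"
  using faulhaber_b_eq_hasse_cos_part_coeff[OF assms]
    fps_nth_hasse_cos_part_mult_zeta_cot_fps[OF assms(2)] by simp

lemma zeta_term_eq_Gamma_form:
  assumes "j < k div 2" "k \<le> n"
  shows "(- 1) ^ j * hasse_cos_coeff k (2 * j + 2) *
      riemann_zeta (real (2 * (n - Suc j))) / (2 * pi) ^ (2 * (n - Suc j)) =
    (- 1) ^ j * Gamma (2 * real k - 2 - 2 * real j)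
      / (Gamma (real k - 1 - 2 * real j) * Gamma (2 * real j + 2))
      * riemann_zeta (2 * real n - 2 * real j - 2) / (2 * pi) ^ (2 * n - 2 * j - 2)"
proof -
  have "2 * j + 2 \<le> k" using assms(1) by linarith
  moreover have "real (2 * (n - Suc j)) = 2 * real n - 2 * real j - 2"
      "2 * (n - Suc j) = 2 * n - 2 * j - 2"
    using \<open>2 * j + 2 \<le> k\<close> assms(2) by (simp_all add: of_nat_diff)
  ultimately show ?thesis by (simp only: hasse_cos_coeff_eq_Gamma times_divide_eq_right)
qed

theorem mainTheorem3:
  fixes n k :: nat
  assumes "2 \<le> k" and "k \<le> n"
  shows "faulhaber_b n k =
    4 * Gamma (2 * real n + 1) * Gamma (real k + 2) / Gamma (2 * real k + 3) *
    (\<Sum>j = 0..<k div 2.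
        (-1) ^ j * Gamma (2 * real k - 2 - 2 * real j)
          / (Gamma (real k - 1 - 2 * real j) * Gamma (2 * real j + 2))
        * riemann_zeta (2 * real n - 2 * real j - 2)
          / (2 * pi) ^ (2 * n - 2 * j - 2))"
  unfolding faulhaber_b_eq_zeta_sum[OF assms] Gamma_ratio_eq_fact atLeast0LessThan
  using assms(2) by (intro arg_cong2[where f = "(*)"] sum.cong refl zeta_term_eq_Gamma_form) auto

end
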